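(* Run the mechanism BFM-VM described in the context with arbitrary $B>0$, $\alpha>1$, $\ell\in\{1,2\}$, with all sellers behaving truthfully. Then $v(S^* )+\rho_1\ge\rho_{M-1}$, and consequently $$\frac{\alpha^2}{\alpha-1}\,v(S^* )\ \ge\ \rho_M.$$
   Context: Setting. $\mathcal{N}$ is a finite set of $n$ sellers. The valuation $v:2^{\mathcal{N}}\to\mathbb{R}_{\ge 0}$ satisfies $v(\emptyset)=0$ and is submodular (for $X\subseteq Y\subseteq\mathcal{N}$ and $u\notin Y$, $v(u\mid Y)\le v(u\mid X)$), not necessarily monotone, where $v(S\mid T)=v(S\cup T)-v(T)$, $v(u\mid T)=v(\{u\}\mid T)$, $v(u)=v(\{u\})$. Each seller $u$ has a private cost $c(u)\ge 0$. $B>0$ is the budget, $[\ell]=\{1,\dots,\ell\}$. Sellers behave truthfully: a seller $u$ offered price $q$ accepts iff $c(u)\le q$. Mechanism BFM-VM (inputs $B$, $\alpha>1$, $\ell\in\{1,2\}$): 1. Offer every seller the price $B$; let $R$ be the set of sellers who accept, and set $p(u)=B$ for $u\in R$. 2. Set $t=1$, $\rho_1=\max_{u\in R}v(u)$, $S_{1,1}=\{u_0\}$ for some $u_0\in\arg\max_{u\in R}v(u)$, and (if $\ell=2$) $S_{2,1}=\emptyset$. 3. Repeat rounds: set $t\leftarrow t+1$, $\rho_t=\alpha\rho_{t-1}$, $S_{i,t}=\emptyset$ for $i\in[\ell]$. Process the sellers $u\in R\setminus\bigcup_{i=1}^{\ell}S_{i,t-1}$ one at a time in a fixed order. For each such $u$: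 pick $j\in\arg\max_{i\in[\ell]}v(u\mid S_{i,t})$ (current contents); update $p(u)\leftarrow\min\{p(u),\ v(u\mid S_{j,t})/(\rho_t/B)\}$ and offer $p(u)$ to $u$. If $u$ accepts: if $v(S_{j,t}\cup\{u\})>\rho_t$, end the round immediately; otherwise add $u$ to $S_{j,t}$. If $u$ rejects, remove $u$ from $R$. After the round, stop if $R\setminus\bigcup_{i=1}^{\ell}(S_{i,t-1}\cup S_{i,t})=\emptyset$; otherwise start another round. 4. Let $M$ be the final value of $t$. Output $S^*\in\arg\max_{A\in\{S_{i,t}: i\in[\ell],\ t\in\{M-1,M\}\}}v(A)$, paying each $u\in S^*$ its current price $p(u)$. Notation: $\rho_t$ is the threshold of round $t$ ($\rho_t=\alpha^{t-1}\rho_1$). *)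

theory Defs
  imports Complex_Main
begin

definition marg :: "('a set \<Rightarrow> real) \<Rightarrow> 'a \<Rightarrow> 'a set \<Rightarrow> real" where
  "marg v u S = v (insert u S) - v S"

definition submodular_on :: "'a set \<Rightarrow> ('a set \<Rightarrow> real) \<Rightarrow> bool" where
  "submodular_on N v \<longleftrightarrow>
     (\<forall>X Y u. X \<subseteq> Y \<longrightarrow> Y \<subseteq> N \<longrightarrow> u \<in> N \<longrightarrow> u \<notin> Y \<longrightarrow> marg v u Y \<le> marg v u X)"

text \<open>Processing of one round of BFM-VM (step 3).
  Arguments: list of sellers still to be processed (in the fixed order), current sets S i
  (i in {1..l}), current R, current prices p; then the resulting sets, R and prices at the
  end of the round.  The choice of j among the maximisers is arbitrary (nondeterministic).\<close>
inductive bfm_round ::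
  "('a set \<Rightarrow> real) \<Rightarrow> ('a \<Rightarrow> real) \<Rightarrow> real \<Rightarrow> nat \<Rightarrow> real \<Rightarrow>
   'a list \<Rightarrow> (nat \<Rightarrow> 'a set) \<Rightarrow> 'a set \<Rightarrow> ('a \<Rightarrow> real) \<Rightarrow>
   (nat \<Rightarrow> 'a set) \<Rightarrow> 'a set \<Rightarrow> ('a \<Rightarrow> real) \<Rightarrow> bool"
  for v c B l rho where
  done_: "bfm_round v c B l rho [] S R p S R p"
| accept_stop:
    "\<lbrakk> j \<in> {1..l}; \<forall>i\<in>{1..l}. marg v u (S i) \<le> marg v u (S j);
       q = min (p u) (marg v u (S j) / (rho / B));
       c u \<le> q; v (insert u (S j)) > rho \<rbrakk>
     \<Longrightarrow> bfm_round v c B l rho (u # xs) S R p S R (p(u := q))"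
| accept_add:
    "\<lbrakk> j \<in> {1..l}; \<forall>i\<in>{1..l}. marg v u (S i) \<le> marg v u (S j);
       q = min (p u) (marg v u (S j) / (rho / B));
       c u \<le> q; \<not> v (insert u (S j)) > rho;
       bfm_round v c B l rho xs (S(j := insert u (S j))) R (p(u := q)) S' R' p' \<rbrakk>
     \<Longrightarrow> bfm_round v c B l rho (u # xs) S R p S' R' p'"
| reject:
    "\<lbrakk> j \<in> {1..l}; \<forall>i\<in>{1..l}. marg v u (S i) \<le> marg v u (S j);
       q = min (p u) (marg v u (S j) / (rho / B));
       \<not> c u \<le> q;
       bfm_round v c B l rho xs S (R - {u}) (p(u := q)) S' R' p' \<rbrakk>
     \<Longrightarrow> bfm_round v c B l rho (u # xs) S R p S' R' p'"

text \<open>Sellers accepting the initial offer B (step 1) and rho_1 (step 2).\<close>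
definition R0 :: "'a set \<Rightarrow> ('a \<Rightarrow> real) \<Rightarrow> real \<Rightarrow> 'a set" where
  "R0 N c B = {u \<in> N. c u \<le> B}"

definition rho1 :: "('a set \<Rightarrow> real) \<Rightarrow> 'a set \<Rightarrow> real" where
  "rho1 v R = Max ((\<lambda>u. v {u}) ` R)"

definition rho :: "real \<Rightarrow> real \<Rightarrow> nat \<Rightarrow> real" where
  "rho r1 \<alpha> t = \<alpha> ^ (t - 1) * r1"

text \<open>A complete (terminated) run of BFM-VM with truthful sellers.
  ord: the fixed processing order (a list enumerating N without repetitions).
  S t i = S_{i,t}; Rs t = R at the end of round t; ps t = prices at the end of round t;
  M = final round index; Sstar = output set.\<close>
definition bfm_vm_run ::
  "'a set \<Rightarrow> ('a set \<Rightarrow> real) \<Rightarrow> ('a \<Rightarrow> real) \<Rightarrow> real \<Rightarrow> real \<Rightarrow> nat \<Rightarrow> 'a list \<Rightarrow>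
   nat \<Rightarrow> (nat \<Rightarrow> nat \<Rightarrow> 'a set) \<Rightarrow> (nat \<Rightarrow> 'a set) \<Rightarrow> (nat \<Rightarrow> 'a \<Rightarrow> real) \<Rightarrow> 'a set \<Rightarrow> bool"
  where
  "bfm_vm_run N v c B \<alpha> l ord M S Rs ps Sstar \<longleftrightarrow>
     (let R_0 = R0 N c B; r1 = rho1 v R_0 in
      2 \<le> M \<and>
      Rs 1 = R_0 \<and> ps 1 = (\<lambda>_. B) \<and>
      (\<exists>u0\<in>R_0. v {u0} = r1 \<and> S 1 1 = {u0}) \<and>
      (l = 2 \<longrightarrow> S 1 2 = {}) \<and>
      (\<forall>t\<in>{2..M}.
         bfm_round v c B l (rho r1 \<alpha> t)
           (filter (\<lambda>u. u \<in> Rs (t - 1) \<and> u \<notin> (\<Union>i\<in>{1..l}. S (t - 1) i)) ord)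
           (\<lambda>_. {}) (Rs (t - 1)) (ps (t - 1)) (S t) (Rs t) (ps t)) \<and>
      (\<forall>t\<in>{2..<M}. Rs t - (\<Union>i\<in>{1..l}. S (t - 1) i \<union> S t i) \<noteq> {}) \<and>
      Rs M - (\<Union>i\<in>{1..l}. S (M - 1) i \<union> S M i) = {} \<and>
      (\<exists>i\<in>{1..l}. \<exists>t\<in>{M - 1, M}. Sstar = S t i) \<and>
      (\<forall>i\<in>{1..l}. \<forall>t\<in>{M - 1, M}. v (S t i) \<le> v Sstar))"

end

theory Submission
  imports Defs
begin

text \<open>If a round follows round \<open>t\<close>, then round \<open>t\<close> cannot have processed all of its sellers,
  so it was ended by an accepting seller \<open>u\<close> with \<open>v(S\<^sub>j\<^sub>,\<^sub>t \<union> {u}) > \<rho>\<^sub>t\<close>. For \<open>t = M - 1\<close> the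
  set \<open>S\<^sub>j\<^sub>,\<^sub>t\<close> is a candidate for \<open>S\<^sup>*\<close>, and submodularity gives
  \<open>v(S\<^sub>j\<^sub>,\<^sub>t \<union> {u}) \<le> v(S\<^sub>j\<^sub>,\<^sub>t) + v(u) \<le> v(S\<^sup>*) + \<rho>\<^sub>1\<close>, the first inequality. For \<open>M \<ge> 3\<close> it
  also yields \<open>(\<alpha> - 1) \<rho>\<^sub>1 \<le> v(S\<^sup>*)\<close>, and then
  \<open>\<rho>\<^sub>M = \<alpha> \<rho>\<^sub>M\<^sub>-\<^sub>1 \<le> \<alpha> (v(S\<^sup>*) + \<rho>\<^sub>1) \<le> \<alpha>\<^sup>2 / (\<alpha> - 1) v(S\<^sup>*)\<close>; for \<open>M = 2\<close> one uses
  \<open>\<rho>\<^sub>1 = v(S\<^sub>1\<^sub>,\<^sub>1) \<le> v(S\<^sup>*)\<close> instead.\<close>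

lemma submodular_on_insert_le:
  assumes "submodular_on N v" "X \<subseteq> N" "u \<in> N" "v {} \<le> v {u}"
  shows "v (insert u X) + v {} \<le> v X + v {u}"
proof (cases "u \<in> X")
  case True
  then show ?thesis using assms(4) by (simp add: insert_absorb)
next
  case False
  then have "marg v u X \<le> marg v u {}"
    using assms(1-3) unfolding submodular_on_def by blast
  then show ?thesis unfolding marg_def by simp
qed

lemma singleton_le_rho1:
  assumes "finite R" "u \<in> R"
  shows "v {u} \<le> rho1 v R"
  unfolding rho1_def using assms by (intro Max_ge) auto

lemma scaled_le_ratio_mult:
  fixes \<alpha> r x :: real
  assumes "\<alpha> > 1" "0 \<le> r" "r \<le> x"
  shows "\<alpha> * r \<le> \<alpha>\<^sup>2 / (\<alpha> - 1) * x"
proof -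
  have "\<alpha> \<le> \<alpha>\<^sup>2 / (\<alpha> - 1)"
    using assms(1) by (simp add: field_simps power2_eq_square)
  then show ?thesis
    using assms by (meson dual_order.trans mult_mono order.strict_implies_order zero_less_one)
qed

lemma geometric_threshold_le_ratio_mult:
  fixes \<alpha> r x :: real
  assumes "\<alpha> > 1" "0 \<le> r" "1 \<le> m" "\<alpha> ^ m * r \<le> x + r"
  shows "\<alpha> ^ Suc m * r \<le> \<alpha>\<^sup>2 / (\<alpha> - 1) * x"
proof -
  have "\<alpha> \<le> \<alpha> ^ m"
    using assms(1,3) by (metis less_imp_le power_increasing power_one_right)
  then have "\<alpha> * r \<le> \<alpha> ^ m * r"
    using assms(2) by (rule mult_right_mono)
  then have "(\<alpha> - 1) * r \<le> x"
    using assms(4) by (simp add: left_diff_distrib)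
  then have r_le: "r \<le> x / (\<alpha> - 1)"
    using assms(1) by (simp add: field_simps)
  have "\<alpha> ^ Suc m * r = \<alpha> * (\<alpha> ^ m * r)"
    by (simp add: mult.assoc)
  also have "\<dots> \<le> \<alpha> * (x + r)"
    using assms(1,4) by simp
  also have "\<dots> \<le> \<alpha> * (x + x / (\<alpha> - 1))"
    using assms(1) r_le by simp
  also have "\<dots> = \<alpha>\<^sup>2 / (\<alpha> - 1) * x"
    using assms(1) by (simp add: field_simps power2_eq_square)
  finally show ?thesis .
qed

lemma bfm_round_R_subset:
  "bfm_round v c B l \<theta> xs S R p S' R' p' \<Longrightarrow> R' \<subseteq> R"
  by (induction rule: bfm_round.induct) auto

lemma bfm_round_sets_mono:
  "bfm_round v c B l \<theta> xs S R p S' R' p' \<Longrightarrow> S i \<subseteq> S' i"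
proof (induction rule: bfm_round.induct)
  case (accept_add j u S p q xs R S' R' p')
  then show ?case by (metis fun_upd_apply subset_insertI order_trans)
qed auto

lemma bfm_round_sets_subset:
  "bfm_round v c B l \<theta> xs S R p S' R' p' \<Longrightarrow> S' i \<subseteq> S i \<union> set xs"
  by (induction rule: bfm_round.induct) (auto split: if_splits)

lemma bfm_round_stops_or_covers:
  assumes "bfm_round v c B l \<theta> xs S R p S' R' p'"
  shows "(\<exists>u\<in>set xs. \<exists>j\<in>{1..l}. \<theta> < v (insert u (S' j)))
    \<or> (\<forall>u\<in>set xs. u \<in> R' \<longrightarrow> (\<exists>i\<in>{1..l}. u \<in> S' i))"
  using assms
proof (induction rule: bfm_round.induct)
  case (accept_add j u S p q xs R S' R' p')
  have "u \<in> S' j"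
    using bfm_round_sets_mono[OF accept_add.hyps(6), of j] by simp
  then show ?case using accept_add.IH accept_add.hyps(1) by auto
next
  case (reject j u S p q xs R S' R' p')
  then show ?case using bfm_round_R_subset by fastforce
qed auto

lemma bfm_vm_run_round:
  assumes "bfm_vm_run N v c B \<alpha> l ord M S Rs ps Sstar" "t \<in> {2..M}"
  shows "bfm_round v c B l (rho (rho1 v (R0 N c B)) \<alpha> t)
      (filter (\<lambda>u. u \<in> Rs (t - 1) \<and> u \<notin> (\<Union>i\<in>{1..l}. S (t - 1) i)) ord)
      (\<lambda>_. {}) (Rs (t - 1)) (ps (t - 1)) (S t) (Rs t) (ps t)"
  using assms unfolding bfm_vm_run_def Let_def by blast

lemma bfm_vm_run_Rs_subset:
  assumes run: "bfm_vm_run N v c B \<alpha> l ord M S Rs ps Sstar" and "1 \<le> t" "t \<le> M"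
  shows "Rs t \<subseteq> R0 N c B"
  using assms(2,3)
proof (induction t rule: dec_induct)
  case base
  then show ?case using run unfolding bfm_vm_run_def Let_def by simp
next
  case (step t)
  then have "Suc t \<in> {2..M}" by simp
  then have "Rs (Suc t) \<subseteq> Rs t"
    using bfm_round_R_subset[OF bfm_vm_run_round[OF run]] by fastforce
  then show ?case using step by simp
qed

lemma bfm_vm_run_sets_subset:
  assumes run: "bfm_vm_run N v c B \<alpha> l ord M S Rs ps Sstar"
    and ord: "set ord = N" and t: "t \<in> {2..M}"
  shows "S t i \<subseteq> N"
  using bfm_round_sets_subset[OF bfm_vm_run_round[OF run t], of i] ord by auto

lemma bfm_vm_run_round_stops:
  assumes run: "bfm_vm_run N v c B \<alpha> l ord M S Rs ps Sstar"
    and ord: "set ord = N" and t: "t \<in> {2..<M}"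
  shows "\<exists>u\<in>R0 N c B. \<exists>j\<in>{1..l}. rho (rho1 v (R0 N c B)) \<alpha> t < v (insert u (S t j))"
proof -
  define xs where "xs = filter (\<lambda>u. u \<in> Rs (t - 1) \<and> u \<notin> (\<Union>i\<in>{1..l}. S (t - 1) i)) ord"
  have round: "bfm_round v c B l (rho (rho1 v (R0 N c B)) \<alpha> t) xs
      (\<lambda>_. {}) (Rs (t - 1)) (ps (t - 1)) (S t) (Rs t) (ps t)"
    using bfm_vm_run_round[OF run] t unfolding xs_def by simp
  have "1 \<le> t - 1" "t - 1 \<le> M" using t by auto
  then have prev_sub: "Rs (t - 1) \<subseteq> R0 N c B"
    using bfm_vm_run_Rs_subset[OF run] by blast
  then have xs_sub: "set xs \<subseteq> R0 N c B"
    unfolding xs_def by auto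
  obtain w where w: "w \<in> Rs t" "w \<notin> (\<Union>i\<in>{1..l}. S (t - 1) i \<union> S t i)"
    using run t unfolding bfm_vm_run_def Let_def by blast
  have "w \<in> Rs (t - 1)"
    using w(1) bfm_round_R_subset[OF round] by blast
  moreover have "w \<in> N"
    using calculation prev_sub unfolding R0_def by blast
  ultimately have "w \<in> set xs"
    using w(2) ord unfolding xs_def by auto
  then have "\<exists>u\<in>set xs. \<exists>j\<in>{1..l}. rho (rho1 v (R0 N c B)) \<alpha> t < v (insert u (S t j))"
    using bfm_round_stops_or_covers[OF round] w by blast
  then show ?thesis using xs_sub by blast
qed

lemma bfm_vm_run_penultimate_threshold:
  assumes run: "bfm_vm_run N v c B \<alpha> l ord M S Rs ps Sstar"
    and "finite N" "set ord = N" "v {} = 0" "\<forall>X\<subseteq>N. v X \<ge> 0" "submodular_on N v"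
    and "3 \<le> M"
  shows "rho (rho1 v (R0 N c B)) \<alpha> (M - 1) \<le> v Sstar + rho1 v (R0 N c B)"
proof -
  have t: "M - 1 \<in> {2..<M}" using \<open>3 \<le> M\<close> by auto
  obtain u j where u: "u \<in> R0 N c B" and j: "j \<in> {1..l}"
    and exceeds: "rho (rho1 v (R0 N c B)) \<alpha> (M - 1) < v (insert u (S (M - 1) j))"
    using bfm_vm_run_round_stops[OF run \<open>set ord = N\<close> t] by blast
  have u_N: "u \<in> N" using u unfolding R0_def by simp
  have S_N: "S (M - 1) j \<subseteq> N"
    using bfm_vm_run_sets_subset[OF run \<open>set ord = N\<close>] t by simp
  have "v (insert u (S (M - 1) j)) \<le> v (S (M - 1) j) + v {u}"
    using submodular_on_insert_le[OF \<open>submodular_on N v\<close> S_N u_N] assms(4,5) u_N by simp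
  also have "\<dots> \<le> v Sstar + rho1 v (R0 N c B)"
  proof -
    have "v (S (M - 1) j) \<le> v Sstar"
      using run j unfolding bfm_vm_run_def Let_def by simp
    moreover have "finite (R0 N c B)"
      using \<open>finite N\<close> unfolding R0_def by simp
    ultimately show ?thesis using singleton_le_rho1[OF _ u] by (simp add: add_mono)
  qed
  finally show ?thesis using exceeds by simp
qed

lemma bfm_vm_run_rho1_le_output:
  assumes "bfm_vm_run N v c B \<alpha> l ord M S Rs ps Sstar" "M = 2" "1 \<le> l"
  shows "rho1 v (R0 N c B) \<le> v Sstar"
proof -
  obtain u0 where u0: "v {u0} = rho1 v (R0 N c B)" "S 1 1 = {u0}"
    and output_max: "\<forall>i\<in>{1..l}. \<forall>t\<in>{M - 1, M}. v (S t i) \<le> v Sstar"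
    using assms(1) unfolding bfm_vm_run_def Let_def by blast
  have "v (S (M - 1) 1) \<le> v Sstar"
    using output_max assms(3) by simp
  then show ?thesis using u0 assms(2) by simp
qed

theorem lemma5p2:
  fixes N :: "'a set" and v :: "'a set \<Rightarrow> real" and c :: "'a \<Rightarrow> real"
    and B \<alpha> :: real and l M :: nat and ord :: "'a list"
    and S :: "nat \<Rightarrow> nat \<Rightarrow> 'a set" and Rs :: "nat \<Rightarrow> 'a set"
    and ps :: "nat \<Rightarrow> 'a \<Rightarrow> real" and Sstar :: "'a set"
  assumes "finite N"
    and "set ord = N" and "distinct ord"
    and "v {} = 0"
    and "\<forall>X\<subseteq>N. v X \<ge> 0"
    and "submodular_on N v"
    and "\<forall>u\<in>N. c u \<ge> 0"
    and "B > 0" and "\<alpha> > 1" and "l \<in> {1, 2}"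
    and "R0 N c B \<noteq> {}"
    and "bfm_vm_run N v c B \<alpha> l ord M S Rs ps Sstar"
  shows "v Sstar + rho (rho1 v (R0 N c B)) \<alpha> 1 \<ge> rho (rho1 v (R0 N c B)) \<alpha> (M - 1)
    \<and> \<alpha>\<^sup>2 / (\<alpha> - 1) * v Sstar \<ge> rho (rho1 v (R0 N c B)) \<alpha> M"
proof -
  let ?r1 = "rho1 v (R0 N c B)"
  obtain u where u: "u \<in> R0 N c B" using \<open>R0 N c B \<noteq> {}\<close> by blast
  have "finite (R0 N c B)" using \<open>finite N\<close> unfolding R0_def by simp
  then have r1_nonneg: "0 \<le> ?r1"
    using singleton_le_rho1[OF _ u, of v] u \<open>\<forall>X\<subseteq>N. v X \<ge> 0\<close> unfolding R0_def by force
  have "2 \<le> M"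
    using assms(12) unfolding bfm_vm_run_def Let_def by blast
  then consider "M = 2" | "3 \<le> M" by linarith
  then show ?thesis
  proof cases
    case 1
    moreover have "1 \<le> l" using \<open>l \<in> {1, 2}\<close> by auto
    ultimately have "?r1 \<le> v Sstar"
      using bfm_vm_run_rho1_le_output[OF assms(12)] by blast
    then show ?thesis
      using 1 r1_nonneg scaled_le_ratio_mult[OF \<open>\<alpha> > 1\<close> r1_nonneg] by (simp add: rho_def)
  next
    case 2
    then have penultimate: "rho ?r1 \<alpha> (M - 1) \<le> v Sstar + ?r1"
      using bfm_vm_run_penultimate_threshold[OF assms(12,1,2,4,5,6)] by blast
    have "M - 1 = Suc (M - 2)" using 2 by simp
    then have "rho ?r1 \<alpha> M \<le> \<alpha>\<^sup>2 / (\<alpha> - 1) * v Sstar"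
      using geometric_threshold_le_ratio_mult[OF \<open>\<alpha> > 1\<close> r1_nonneg, of "M - 2" "v Sstar"]
        penultimate 2 by (simp add: rho_def)
    then show ?thesis using penultimate by (simp add: rho_def)
  qed
qed

end
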